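(* Consider $x(t+1)=Ax(t)+Bu(t)$, $y(t)=Cx(t)+e(t)+d(t)$ with $\|d(t)\|_\infty\le d_{\max}$ for all $t$, where there is a fixed set of at most $s$ sensors outside of which $e_i(t)=0$ for all $t$. Assume that $\mathcal{O}_\Gamma$ has full column rank for every $\Gamma\in\mathbb{C}_p^{p-s}$ (window length $l$ with $l+1\ge n$). Let $H\in\mathbb{R}^{r\times n}$, $q\in\mathbb{R}^r$, $\mathcal{C}=\{x:Hx+q\ge0\}$, $0<\gamma<1$, and let $u_{\mathrm{nom}}$ be any nominal input signal. For each $t\ge l$ let $u(t)=u_{\mathrm{safe}}(t)$ be the solution of the quadratic program $$u_{\mathrm{safe}}(t)=\arg\min_u\|u-u_{\mathrm{nom}}(t)\|^2\ \ \text{s.t.}\ \ HBu+H(A-(1-\gamma)I)x_d^{t,\Gamma}+\gamma q-\Delta_\Gamma\mathbf{1}\ge0\ \ \text{for all }\Gamma\in\mathbb{C}_p^{p-s}\text{ with }\underline d^\Gamma\le d_{\max},$$ and suppose this program is feasible for every $t\ge l$. If $x(l)\in\mathcal{C}$, then $x(t)\in\mathcal{C}$ for all $t\ge l$.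
   Context: $C_i$ is the $i$-th row of $C$; $\mathbb{C}_p^{p-s}$ is the collection of subsets of $\{1,\dots,p\}$ of size $p-s$. At time $t$, using the data $u(t-l),\dots,u(t-1)$, $y(t-l),\dots,y(t)$: $\mathcal{O}_i=(C_i;C_iA;\dots;C_iA^l)$, $\widetilde Y_i=(y_i(t-l),\dots,y_i(t))^\top$, $U=(u(t-l);\dots;u(t-1);0)$, $F_i$ the block lower-triangular matrix with $(j,k)$ block $C_iA^{j-k-1}B$ for $j>k$ and $0$ otherwise, $Y_i=\widetilde Y_i-F_iU$; $\mathcal{O}_\Gamma,Y_\Gamma$ are the vertical stacks over $i\in\Gamma$. $(x_d^{t-l,\Gamma},\underline d^\Gamma)$ is a minimizer of $\min_{x,\delta}\delta$ s.t. $-\delta\mathbf{1}\le\mathcal{O}_\Gamma x-Y_\Gamma\le\delta\mathbf{1}$; $d_e^\Gamma=d_{\max}+\underline d^\Gamma$; $x_d^{t,\Gamma}=A^lx_d^{t-l,\Gamma}+\sum_{k=1}^lA^{k-1}Bu(t-k)$; $m(\mathcal{O}_\Gamma)=\inf_{\|a\|_\infty=1}\|\mathcal{O}_\Gamma a\|_\infty$; $\Delta_\Gamma=\|H(A-(1-\gamma)I)\|_\infty\|A\|_\infty^l d_e^\Gamma/m(\mathcal{O}_\Gamma)$, with matrix $\infty$-norms the induced operator norms. Inequalities are componentwise. *)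

theory Defs
  imports "HOL-Analysis.Analysis"
begin

text \<open>Matrix power (note: the power operator on vec is componentwise, so we define
  the matrix power explicitly via matrix multiplication).\<close>
primrec mpow :: "real^'n^'n \<Rightarrow> nat \<Rightarrow> real^'n^'n" where
  "mpow A 0 = mat 1"
| "mpow A (Suc k) = A ** mpow A k"

definition mat_infnorm :: "real^'a^'b \<Rightarrow> real" where
  "mat_infnorm M = Sup {infnorm (M *v x) | x. infnorm x = 1}"

text \<open>Entry (i,j) of the stacked observability matrix applied to a:
  i-th sensor, j-th time step: C_i A^j a.\<close>
definition obs_entry :: "real^'n^'p \<Rightarrow> real^'n^'n \<Rightarrow> 'p \<Rightarrow> nat \<Rightarrow> real^'n \<Rightarrow> real" where
  "obs_entry C A i j a = row i C \<bullet> (mpow A j *v a)"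

definition obs_full_rank :: "real^'n^'p \<Rightarrow> real^'n^'n \<Rightarrow> nat \<Rightarrow> 'p set \<Rightarrow> bool" where
  "obs_full_rank C A l \<Gamma> \<longleftrightarrow>
     (\<forall>a. (\<forall>i\<in>\<Gamma>. \<forall>j\<le>l. obs_entry C A i j a = 0) \<longrightarrow> a = 0)"

definition obs_infnorm :: "real^'n^'p \<Rightarrow> real^'n^'n \<Rightarrow> nat \<Rightarrow> 'p set \<Rightarrow> real^'n \<Rightarrow> real" where
  "obs_infnorm C A l \<Gamma> a = Max {\<bar>obs_entry C A i j a\<bar> | i j. i \<in> \<Gamma> \<and> j \<le> l}"

definition obs_m :: "real^'n^'p \<Rightarrow> real^'n^'n \<Rightarrow> nat \<Rightarrow> 'p set \<Rightarrow> real" where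
  "obs_m C A l \<Gamma> = Inf {obs_infnorm C A l \<Gamma> a | a. infnorm a = 1}"

text \<open>Entry j (j = 0..l) of Y_i = Ytilde_i - F_i U at time t, written out:
  y_i(t-l+j) - sum_{k<j} C_i A^(j-k-1) B u(t-l+k).\<close>
definition Yval :: "real^'n^'p \<Rightarrow> real^'n^'n \<Rightarrow> real^'m^'n \<Rightarrow> nat \<Rightarrow>
    (nat \<Rightarrow> real^'p) \<Rightarrow> (nat \<Rightarrow> real^'m) \<Rightarrow> nat \<Rightarrow> 'p \<Rightarrow> nat \<Rightarrow> real" where
  "Yval C A B l y u t i j =
     y (t - l + j) $ i - (\<Sum>k<j. row i C \<bullet> (mpow A (j - k - 1) *v (B *v u (t - l + k))))"

definition lp_feasible :: "real^'n^'p \<Rightarrow> real^'n^'n \<Rightarrow> real^'m^'n \<Rightarrow> nat \<Rightarrow>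
    (nat \<Rightarrow> real^'p) \<Rightarrow> (nat \<Rightarrow> real^'m) \<Rightarrow> nat \<Rightarrow> 'p set \<Rightarrow> real^'n \<Rightarrow> real \<Rightarrow> bool" where
  "lp_feasible C A B l y u t \<Gamma> x \<delta> \<longleftrightarrow>
     (\<forall>i\<in>\<Gamma>. \<forall>j\<le>l. - \<delta> \<le> obs_entry C A i j x - Yval C A B l y u t i j
                    \<and> obs_entry C A i j x - Yval C A B l y u t i j \<le> \<delta>)"

definition lp_minimizer :: "real^'n^'p \<Rightarrow> real^'n^'n \<Rightarrow> real^'m^'n \<Rightarrow> nat \<Rightarrow>
    (nat \<Rightarrow> real^'p) \<Rightarrow> (nat \<Rightarrow> real^'m) \<Rightarrow> nat \<Rightarrow> 'p set \<Rightarrow> real^'n \<Rightarrow> real \<Rightarrow> bool" where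
  "lp_minimizer C A B l y u t \<Gamma> x \<delta> \<longleftrightarrow>
     lp_feasible C A B l y u t \<Gamma> x \<delta> \<and>
     (\<forall>x' \<delta>'. lp_feasible C A B l y u t \<Gamma> x' \<delta>' \<longrightarrow> \<delta> \<le> \<delta>')"

definition xd_prop :: "real^'n^'n \<Rightarrow> real^'m^'n \<Rightarrow> nat \<Rightarrow> (nat \<Rightarrow> real^'m) \<Rightarrow> nat \<Rightarrow>
    real^'n \<Rightarrow> real^'n" where
  "xd_prop A B l u t x0 = mpow A l *v x0 + (\<Sum>k=1..l. mpow A (k - 1) *v (B *v u (t - k)))"

definition Delta :: "real^'n^'r \<Rightarrow> real^'n^'n \<Rightarrow> real \<Rightarrow> nat \<Rightarrow> real \<Rightarrow> real \<Rightarrow> real \<Rightarrow> real" where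
  "Delta H A \<gamma> l dmax dlow m =
     mat_infnorm (H ** (A - (1 - \<gamma>) *\<^sub>R mat 1)) * mat_infnorm A ^ l * (dmax + dlow) / m"

definition qp_constraint :: "real^'n^'r \<Rightarrow> real^'r \<Rightarrow> real^'n^'n \<Rightarrow> real^'m^'n \<Rightarrow> real \<Rightarrow>
    real^'n \<Rightarrow> real \<Rightarrow> real^'m \<Rightarrow> bool" where
  "qp_constraint H q A B \<gamma> xd \<Delta> v \<longleftrightarrow>
     (\<forall>k. 0 \<le> (H *v (B *v v) + H *v ((A - (1 - \<gamma>) *\<^sub>R mat 1) *v xd) + \<gamma> *\<^sub>R q) $ k - \<Delta>)"

definition safe_set :: "real^'n^'r \<Rightarrow> real^'r \<Rightarrow> (real^'n) set" where
  "safe_set H q = {x. \<forall>k. 0 \<le> (H *v x + q) $ k}"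

end

theory Submission
  imports Defs
begin

text \<open>Some set \<Gamma> of p - s sensors is never attacked. For it, the true state x(t-l) is
  feasible in the LP with \<delta> = d_max, so the LP optimum of \<Gamma> is at most d_max and the QP
  imposes the constraint of \<Gamma>. Both the LP estimate and x(t-l) fit the data of \<Gamma> up to the LP
  optimum and d_max respectively, so O_\<Gamma> maps their difference into the box of radius d_e;
  full column rank turns this into an \<infinity>-norm error of at most d_e / m(O_\<Gamma>), and propagation
  over the window bounds H(A - (1-\<gamma>)I)(x(t) - x_d) componentwise by \<Delta>_\<Gamma>. The robust
  constraint therefore gives h(x(t+1)) \<ge> (1-\<gamma>) h(x(t)) \<ge> 0 for h(x) = Hx + q.\<close>

lemma trajectory_shift:
  assumes dyn: "\<And>t. x (Suc t) = A *v x t + B *v u t"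
  shows "x (s + j) = mpow A j *v x s + (\<Sum>k<j. mpow A (j - k - 1) *v (B *v u (s + k)))"
proof (induction j)
  case 0
  then show ?case by (simp add: matrix_vector_mul_lid)
next
  case (Suc j)
  have shift: "A *v (mpow A (j - k - 1) *v w) = mpow A (Suc j - k - 1) *v w" if "k < j" for k w
  proof -
    from that have "Suc j - k - 1 = Suc (j - k - 1)" by simp
    then show ?thesis by (simp add: matrix_vector_mul_assoc)
  qed
  have "x (s + Suc j) = A *v x (s + j) + B *v u (s + j)"
    using dyn by simp
  also have "\<dots> = mpow A (Suc j) *v x s
      + (\<Sum>k<j. A *v (mpow A (j - k - 1) *v (B *v u (s + k)))) + B *v u (s + j)"
    using Suc by (simp add: matrix_vector_right_distrib vec.sum matrix_vector_mul_assoc)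
  also have "(\<Sum>k<j. A *v (mpow A (j - k - 1) *v (B *v u (s + k))))
      = (\<Sum>k<j. mpow A (Suc j - k - 1) *v (B *v u (s + k)))"
    using shift by (intro sum.cong) simp_all
  finally show ?case by (simp add: matrix_vector_mul_lid add.assoc)
qed

lemma trajectory_eq_xd_prop:
  assumes dyn: "\<And>t. x (Suc t) = A *v x t + B *v u t" and "l \<le> t"
  shows "x t = xd_prop A B l u t (x (t - l))"
proof -
  have "x t = mpow A l *v x (t - l) + (\<Sum>k<l. mpow A (l - k - 1) *v (B *v u (t - l + k)))"
    using trajectory_shift[of x A B u "t - l" l, OF dyn] \<open>l \<le> t\<close> by simp
  also have "(\<Sum>k<l. mpow A (l - k - 1) *v (B *v u (t - l + k)))
      = (\<Sum>k<l. mpow A k *v (B *v u (t - Suc k)))"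
    using \<open>l \<le> t\<close> sum.nat_diff_reindex[of "\<lambda>k. mpow A k *v (B *v u (t - Suc k))" l]
    by (simp add: Suc_diff_Suc)
  finally show ?thesis
    by (simp add: xd_prop_def sum.atLeast1_atMost_eq)
qed

lemma infnorm_normalize:
  fixes v :: "real^'n"
  assumes "v \<noteq> 0"
  shows "infnorm ((1 / infnorm v) *\<^sub>R v) = 1"
  using assms by (simp add: infnorm_mul infnorm_eq_0 infnorm_pos_le)

lemma ex_infnorm_eq_1: "\<exists>v::real^'n. infnorm v = 1"
  using infnorm_normalize[of "axis undefined 1"] by (metis axis_eq_0_iff zero_neq_one)

lemma bdd_above_infnorm_matrix_image:
  fixes M :: "real^'a^'b"
  shows "bdd_above {infnorm (M *v v) | v. infnorm v = 1}"
proof -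
  obtain K where "K > 0" and K: "\<And>v. norm (M *v v) \<le> norm v * K"
    using bounded_linear.pos_bounded[OF matrix_vector_mul_bounded_linear] by blast
  have "infnorm (M *v v) \<le> sqrt DIM(real^'a) * K" if "infnorm v = 1" for v
  proof -
    have "infnorm (M *v v) \<le> norm v * K"
      using K[of v] infnorm_le_norm[of "M *v v"] by linarith
    also have "\<dots> \<le> sqrt DIM(real^'a) * K"
      using norm_le_infnorm[of v] that \<open>K > 0\<close> by (intro mult_right_mono) simp_all
    finally show ?thesis .
  qed
  then show ?thesis by (intro bdd_aboveI) blast
qed

lemma infnorm_matrix_vector_le_unit:
  fixes M :: "real^'a^'b"
  assumes "infnorm v = 1"
  shows "infnorm (M *v v) \<le> mat_infnorm M"
  unfolding mat_infnorm_def using assms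
  by (intro cSup_upper[OF _ bdd_above_infnorm_matrix_image]) blast

lemma mat_infnorm_nonneg: "0 \<le> mat_infnorm (M::real^'a^'b)"
  using ex_infnorm_eq_1 infnorm_matrix_vector_le_unit infnorm_pos_le order_trans by metis

lemma infnorm_matrix_vector_le: "infnorm ((M::real^'a^'b) *v v) \<le> mat_infnorm M * infnorm v"
proof (cases "v = 0")
  case True
  then show ?thesis by (simp add: infnorm_0)
next
  case False
  then have pos: "infnorm v > 0"
    using infnorm_pos_lt by blast
  have "infnorm (M *v v) / infnorm v = infnorm (M *v ((1 / infnorm v) *\<^sub>R v))"
    using pos by (simp add: matrix_scaleR_vector_ac scaleR_matrix_vector_assoc[symmetric] infnorm_mul)
  also have "\<dots> \<le> mat_infnorm M"
    using False by (intro infnorm_matrix_vector_le_unit infnorm_normalize)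
  finally show ?thesis
    using pos by (simp add: divide_le_eq mult.commute)
qed

lemma infnorm_mpow_vector_le: "infnorm (mpow A l *v v) \<le> mat_infnorm A ^ l * infnorm v"
proof (induction l)
  case 0
  then show ?case by (simp add: matrix_vector_mul_lid)
next
  case (Suc l)
  have "infnorm (mpow A (Suc l) *v v) \<le> mat_infnorm A * infnorm (mpow A l *v v)"
    by (simp add: matrix_vector_mul_assoc[symmetric] infnorm_matrix_vector_le)
  also have "\<dots> \<le> mat_infnorm A * (mat_infnorm A ^ l * infnorm v)"
    using Suc mat_infnorm_nonneg by (intro mult_left_mono) auto
  finally show ?case by simp
qed

lemma obs_entry_diff: "obs_entry C A i j (a - b) = obs_entry C A i j a - obs_entry C A i j b"
  by (simp add: obs_entry_def matrix_vector_mult_diff_distrib inner_diff_right)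

lemma obs_entry_scaleR: "obs_entry C A i j (r *\<^sub>R a) = r * obs_entry C A i j a"
  by (simp add: obs_entry_def matrix_scaleR_vector_ac scaleR_matrix_vector_assoc[symmetric])

lemma continuous_on_obs_entry: "continuous_on S (obs_entry C A i j)"
  unfolding obs_entry_def
  by (intro continuous_intros linear_continuous_on matrix_vector_mul_bounded_linear)

lemma obs_infnorm_image: "{\<bar>obs_entry C A i j a\<bar> | i j. i \<in> \<Gamma> \<and> j \<le> l}
    = (\<lambda>(i, j). \<bar>obs_entry C A i j a\<bar>) ` (\<Gamma> \<times> {..l})"
  by auto

lemma obs_infnorm_ge:
  assumes "i \<in> \<Gamma>" "j \<le> l"
  shows "\<bar>obs_entry C A i j a\<bar> \<le> obs_infnorm C A l \<Gamma> a"
  unfolding obs_infnorm_def obs_infnorm_image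
  by (rule Max_ge) (use assms in auto)

lemma obs_infnorm_le:
  assumes "\<Gamma> \<noteq> {}" "\<And>i j. i \<in> \<Gamma> \<Longrightarrow> j \<le> l \<Longrightarrow> \<bar>obs_entry C A i j a\<bar> \<le> D"
  shows "obs_infnorm C A l \<Gamma> a \<le> D"
  unfolding obs_infnorm_def obs_infnorm_image
  using assms by (subst Max_le_iff) auto

lemma obs_infnorm_scaleR_le:
  assumes "\<Gamma> \<noteq> {}"
  shows "obs_infnorm C A l \<Gamma> (r *\<^sub>R a) \<le> \<bar>r\<bar> * obs_infnorm C A l \<Gamma> a"
proof (rule obs_infnorm_le[OF assms])
  fix i j
  assume "i \<in> \<Gamma>" "j \<le> l"
  then show "\<bar>obs_entry C A i j (r *\<^sub>R a)\<bar> \<le> \<bar>r\<bar> * obs_infnorm C A l \<Gamma> a"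
    unfolding obs_entry_scaleR abs_mult by (intro mult_left_mono obs_infnorm_ge) simp_all
qed

lemma obs_full_rank_nonempty: "obs_full_rank C A l \<Gamma> \<Longrightarrow> \<Gamma> \<noteq> {}"
  unfolding obs_full_rank_def by (metis axis_eq_0_iff empty_iff zero_neq_one)

lemma positive_homogeneous_bounded_below:
  fixes g :: "'a::euclidean_space \<Rightarrow> real"
  assumes cont: "continuous_on UNIV g"
    and hom: "\<And>r a. g (r *\<^sub>R a) = \<bar>r\<bar> * g a"
    and pos: "\<And>a. a \<noteq> 0 \<Longrightarrow> 0 < g a"
  obtains c where "0 < c" "\<And>a. c * norm a \<le> g a"
proof -
  have "sphere (0::'a) 1 \<noteq> {}"
    by simp
  then obtain a0 where a0: "a0 \<in> sphere 0 1"
    and min: "\<And>b. b \<in> sphere 0 1 \<Longrightarrow> g a0 \<le> g b"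
    using continuous_attains_inf[OF compact_sphere _ continuous_on_subset[OF cont]] by blast
  have bound: "g a0 * norm a \<le> g a" for a
  proof (cases "a = 0")
    case True
    then show ?thesis using hom[of 0 a] by simp
  next
    case False
    then have "g a0 \<le> g ((1 / norm a) *\<^sub>R a)"
      by (intro min) simp
    also have "\<dots> = g a / norm a"
      by (simp add: hom)
    finally show ?thesis
      using False by (simp add: le_divide_eq)
  qed
  from a0 have "0 < g a0"
    by (intro pos) auto
  then show thesis
    using bound by (rule that)
qed

lemma obs_infnorm_bounded_below:
  assumes rank: "obs_full_rank C A l \<Gamma>"
  obtains c where "0 < c" "\<And>a. c * infnorm a \<le> obs_infnorm C A l \<Gamma> a"
proof -
  define IJ where "IJ = \<Gamma> \<times> {..l}"
  \<comment> \<open>a continuous stand-in for obs_infnorm, to which compactness of the sphere applies\<close>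
  define g where "g a = (\<Sum>(i, j)\<in>IJ. \<bar>obs_entry C A i j a\<bar>)" for a
  have "finite IJ" "IJ \<noteq> {}"
    unfolding IJ_def using obs_full_rank_nonempty[OF rank] by auto
  then have N_pos: "0 < real (card IJ)"
    by (simp add: card_gt_0_iff)
  have g_pos: "0 < g a" if nonzero: "a \<noteq> 0" for a
  proof -
    obtain i j where ij: "i \<in> \<Gamma>" "j \<le> l" "obs_entry C A i j a \<noteq> 0"
      using rank nonzero unfolding obs_full_rank_def by blast
    then have "(i, j) \<in> IJ"
      by (simp add: IJ_def)
    then have "(\<lambda>(i, j). \<bar>obs_entry C A i j a\<bar>) (i, j) \<le> g a"
      unfolding g_def by (rule member_le_sum[OF _ _ \<open>finite IJ\<close>]) (simp add: case_prod_beta)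
    then have "\<bar>obs_entry C A i j a\<bar> \<le> g a"
      by simp
    with ij(3) show ?thesis by linarith
  qed
  have g_cont: "continuous_on UNIV g"
    unfolding g_def case_prod_beta
    by (intro continuous_on_sum continuous_on_rabs continuous_on_obs_entry)
  have g_hom: "g (r *\<^sub>R a) = \<bar>r\<bar> * g a" for r a
    unfolding g_def by (simp add: obs_entry_scaleR abs_mult sum_distrib_left case_prod_beta)
  obtain c where "0 < c" and c: "\<And>a. c * norm a \<le> g a"
    using positive_homogeneous_bounded_below[OF g_cont g_hom g_pos] by blast
  have cN_pos: "0 < c / card IJ"
    using \<open>0 < c\<close> N_pos by simp
  have cN_bound: "c / card IJ * infnorm a \<le> obs_infnorm C A l \<Gamma> a" for a
  proof -
    have "c * infnorm a \<le> c * norm a"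
      using \<open>0 < c\<close> infnorm_le_norm by simp
    also have "\<dots> \<le> g a"
      by (rule c)
    also have "\<dots> \<le> (\<Sum>_\<in>IJ. obs_infnorm C A l \<Gamma> a)"
      unfolding g_def by (rule sum_mono) (auto simp: IJ_def intro: obs_infnorm_ge)
    also have "\<dots> = card IJ * obs_infnorm C A l \<Gamma> a"
      by simp
    finally show ?thesis
      using N_pos by (simp add: field_simps)
  qed
  show thesis
    using that[OF cN_pos cN_bound] .
qed

lemma obs_m_pos_and_bound:
  assumes rank: "obs_full_rank C A l \<Gamma>"
  shows obs_m_pos: "0 < obs_m C A l \<Gamma>"
    and obs_m_mult_infnorm_le: "obs_m C A l \<Gamma> * infnorm a \<le> obs_infnorm C A l \<Gamma> a"
proof -
  have ne: "\<Gamma> \<noteq> {}"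
    using obs_full_rank_nonempty[OF rank] .
  obtain c where "0 < c" and c: "\<And>a. c * infnorm a \<le> obs_infnorm C A l \<Gamma> a"
    using obs_infnorm_bounded_below[OF rank] by blast
  define S where "S = {obs_infnorm C A l \<Gamma> b | b. infnorm b = 1}"
  have S_ge: "z \<in> S \<Longrightarrow> c \<le> z" for z
  proof -
    assume "z \<in> S"
    then obtain b where "infnorm b = 1" "z = obs_infnorm C A l \<Gamma> b"
      unfolding S_def by blast
    then show "c \<le> z" using c[of b] by simp
  qed
  have "S \<noteq> {}"
    unfolding S_def using ex_infnorm_eq_1 by blast
  then have "c \<le> obs_m C A l \<Gamma>"
    unfolding obs_m_def S_def[symmetric] using S_ge by (rule cInf_greatest)
  with \<open>0 < c\<close> show "0 < obs_m C A l \<Gamma>" by linarith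
  show "obs_m C A l \<Gamma> * infnorm a \<le> obs_infnorm C A l \<Gamma> a"
  proof (cases "a = 0")
    case True
    then show ?thesis
      using c[of a] by (simp add: infnorm_0)
  next
    case False
    then have pos: "0 < infnorm a"
      using infnorm_pos_lt by blast
    have "obs_infnorm C A l \<Gamma> ((1 / infnorm a) *\<^sub>R a) \<in> S"
      unfolding S_def using infnorm_normalize[OF False] by blast
    then have "obs_m C A l \<Gamma> \<le> obs_infnorm C A l \<Gamma> ((1 / infnorm a) *\<^sub>R a)"
      unfolding obs_m_def S_def[symmetric] using bdd_belowI[of S c, OF S_ge] by (rule cInf_lower)
    also have "\<dots> \<le> obs_infnorm C A l \<Gamma> a / infnorm a"
      using obs_infnorm_scaleR_le[OF ne, of C A l "1 / infnorm a" a] pos by simp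
    finally show ?thesis
      using pos_le_divide_eq[OF pos] by blast
  qed
qed

lemma obs_entry_minus_Yval_attack_free:
  assumes dyn: "\<And>t. x (Suc t) = A *v x t + B *v u t"
    and meas: "\<And>t. y t = C *v x t + e t + d t"
    and attack_free: "e (t - l + j) $ i = 0"
  shows "obs_entry C A i j (x (t - l)) - Yval C A B l y u t i j = - d (t - l + j) $ i"
proof -
  have "y (t - l + j) $ i = row i C \<bullet> x (t - l + j) + d (t - l + j) $ i"
    using meas attack_free by (simp add: matrix_vector_mul_component row_def vec_lambda_eta)
  then show ?thesis
    unfolding Yval_def obs_entry_def trajectory_shift[of x A B u, OF dyn]
    by (simp add: inner_add_right inner_sum_right)
qed

lemma lp_feasible_true_state:
  assumes dyn: "\<And>t. x (Suc t) = A *v x t + B *v u t"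
    and meas: "\<And>t. y t = C *v x t + e t + d t"
    and noise: "\<And>t. infnorm (d t) \<le> dmax"
    and attack_free: "\<And>t i. i \<in> \<Gamma> \<Longrightarrow> e t $ i = 0"
  shows "lp_feasible C A B l y u t \<Gamma> (x (t - l)) dmax"
  unfolding lp_feasible_def
proof (intro ballI allI impI)
  fix i j
  assume "i \<in> \<Gamma>" "j \<le> l"
  have "\<bar>d (t - l + j) $ i\<bar> \<le> dmax"
    using component_le_infnorm_cart noise order_trans by blast
  then show "- dmax \<le> obs_entry C A i j (x (t - l)) - Yval C A B l y u t i j
      \<and> obs_entry C A i j (x (t - l)) - Yval C A B l y u t i j \<le> dmax"
    using obs_entry_minus_Yval_attack_free[of x A B u y C e d,
        OF dyn meas attack_free[OF \<open>i \<in> \<Gamma>\<close>]]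
    by auto
qed

lemma lp_minimizer_estimate_error:
  assumes dyn: "\<And>t. x (Suc t) = A *v x t + B *v u t"
    and meas: "\<And>t. y t = C *v x t + e t + d t"
    and noise: "\<And>t. infnorm (d t) \<le> dmax"
    and attack_free: "\<And>t i. i \<in> \<Gamma> \<Longrightarrow> e t $ i = 0"
    and rank: "obs_full_rank C A l \<Gamma>"
    and lp: "lp_minimizer C A B l y u t \<Gamma> xh \<delta>"
  shows "\<delta> \<le> dmax"
    and "infnorm (x (t - l) - xh) \<le> (dmax + \<delta>) / obs_m C A l \<Gamma>"
proof -
  show "\<delta> \<le> dmax"
    using lp lp_feasible_true_state[of x A B u y C e d, OF dyn meas noise attack_free]
    unfolding lp_minimizer_def by blast
  have "\<bar>obs_entry C A i j (x (t - l) - xh)\<bar> \<le> dmax + \<delta>" if "i \<in> \<Gamma>" "j \<le> l" for i j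
  proof -
    have "\<bar>d (t - l + j) $ i\<bar> \<le> dmax"
      using component_le_infnorm_cart noise order_trans by blast
    moreover have "- \<delta> \<le> obs_entry C A i j xh - Yval C A B l y u t i j"
      and "obs_entry C A i j xh - Yval C A B l y u t i j \<le> \<delta>"
      using lp that unfolding lp_minimizer_def lp_feasible_def by blast+
    ultimately show ?thesis
      using obs_entry_minus_Yval_attack_free[of x A B u y C e d t l j i,
          OF dyn meas attack_free[OF \<open>i \<in> \<Gamma>\<close>]]
      by (simp add: obs_entry_diff abs_le_iff)
  qed
  then have "obs_m C A l \<Gamma> * infnorm (x (t - l) - xh) \<le> dmax + \<delta>"
    using obs_m_mult_infnorm_le[OF rank] obs_infnorm_le[OF obs_full_rank_nonempty[OF rank]]
    by (meson order_trans)
  then show "infnorm (x (t - l) - xh) \<le> (dmax + \<delta>) / obs_m C A l \<Gamma>"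
    using obs_m_pos[OF rank] by (simp add: pos_le_divide_eq mult.commute)
qed

lemma xd_prop_diff: "xd_prop A B l u t a - xd_prop A B l u t b = mpow A l *v (a - b)"
  by (simp add: xd_prop_def matrix_vector_mult_diff_distrib)

lemma component_le_Delta:
  assumes "infnorm w \<le> (dmax + \<delta>) / m"
  shows "\<bar>(H *v ((A - (1 - \<gamma>) *\<^sub>R mat 1) *v (mpow A l *v w))) $ k\<bar>
    \<le> Delta H A \<gamma> l dmax \<delta> m"
proof -
  let ?M = "H ** (A - (1 - \<gamma>) *\<^sub>R mat 1)"
  have "\<bar>(H *v ((A - (1 - \<gamma>) *\<^sub>R mat 1) *v (mpow A l *v w))) $ k\<bar>
      = \<bar>(?M *v (mpow A l *v w)) $ k\<bar>"
    by (simp add: matrix_vector_mul_assoc matrix_mul_assoc)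
  also have "\<dots> \<le> mat_infnorm ?M * infnorm (mpow A l *v w)"
    using component_le_infnorm_cart infnorm_matrix_vector_le order_trans by blast
  also have "\<dots> \<le> mat_infnorm ?M * (mat_infnorm A ^ l * ((dmax + \<delta>) / m))"
    using order_trans[OF infnorm_mpow_vector_le mult_left_mono[OF assms zero_le_power[OF mat_infnorm_nonneg]]]
    by (rule mult_left_mono) (rule mat_infnorm_nonneg)
  also have "\<dots> = Delta H A \<gamma> l dmax \<delta> m"
    by (simp add: Delta_def mult.assoc)
  finally show ?thesis .
qed

text \<open>With h(x) = Hx + q and M = A - (1-\<gamma>)I, the identity
  h(Ax + Bv) = (HBv + HM x_d + \<gamma> q) + HM(x - x_d) + (1-\<gamma>) h(x)
  lets the margin D of the constraint absorb the estimation error in the middle term.\<close>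

lemma safe_set_step:
  assumes safe: "x \<in> safe_set H q"
    and constraint: "qp_constraint H q A B \<gamma> xd D v"
    and "\<gamma> \<le> 1"
    and error: "\<And>k. \<bar>(H *v ((A - (1 - \<gamma>) *\<^sub>R mat 1) *v (x - xd))) $ k\<bar> \<le> D"
  shows "A *v x + B *v v \<in> safe_set H q"
proof -
  define M where "M = A - (1 - \<gamma>) *\<^sub>R mat 1"
  have M_apply: "M *v z = A *v z - (1 - \<gamma>) *\<^sub>R z" for z
    unfolding M_def
    by (simp add: matrix_vector_mult_diff_rdistrib scaleR_matrix_vector_assoc[symmetric])
  have identity: "H *v (A *v x + B *v v) + q = (H *v (B *v v) + H *v (M *v xd) + \<gamma> *\<^sub>R q)
      + H *v (M *v (x - xd)) + (1 - \<gamma>) *\<^sub>R (H *v x + q)"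
    unfolding M_apply
    by (simp add: matrix_vector_right_distrib matrix_vector_mult_diff_distrib
        matrix_scaleR_vector_ac scaleR_matrix_vector_assoc[symmetric] algebra_simps)
  show ?thesis
    unfolding safe_set_def
  proof (intro CollectI allI)
    fix k
    have "0 \<le> (H *v (B *v v) + H *v (M *v xd) + \<gamma> *\<^sub>R q) $ k - D"
      using constraint unfolding qp_constraint_def M_def by blast
    moreover have "0 \<le> (1 - \<gamma>) * (H *v x + q) $ k"
      using safe \<open>\<gamma> \<le> 1\<close> unfolding safe_set_def by simp
    moreover have "- D \<le> (H *v (M *v (x - xd))) $ k"
      using error[of k] unfolding M_def by linarith
    ultimately show "0 \<le> (H *v (A *v x + B *v v) + q) $ k"
      unfolding identity by simp
  qed
qed

lemma obtain_attack_free_sensors: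
  fixes e :: "nat \<Rightarrow> real^'p"
  assumes "card K \<le> s" "\<And>t i. i \<notin> K \<Longrightarrow> e t $ i = 0"
  obtains \<Gamma> where "card \<Gamma> = CARD('p) - s" "\<And>t i. i \<in> \<Gamma> \<Longrightarrow> e t $ i = 0"
proof -
  have "CARD('p) - s \<le> card (UNIV - K)"
    using assms(1) by (simp add: card_Diff_subset)
  then obtain \<Gamma> where "\<Gamma> \<subseteq> UNIV - K" and card: "card \<Gamma> = CARD('p) - s"
    by (rule obtain_subset_with_card_n)
  show thesis
    by (rule that[OF card]) (use \<open>\<Gamma> \<subseteq> UNIV - K\<close> assms(2) in blast)
qed

theorem theorem1:
  fixes A :: "real^'n^'n" and B :: "real^'m^'n" and C :: "real^'n^'p"
    and H :: "real^'n^'r" and q :: "real^'r"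
    and x :: "nat \<Rightarrow> real^'n" and u unom :: "nat \<Rightarrow> real^'m"
    and y e d :: "nat \<Rightarrow> real^'p"
    and dmax \<gamma> :: real and s l :: nat
    and xh :: "nat \<Rightarrow> 'p set \<Rightarrow> real^'n" and dl :: "nat \<Rightarrow> 'p set \<Rightarrow> real"
  assumes dyn: "\<And>t. x (Suc t) = A *v x t + B *v u t"
    and meas: "\<And>t. y t = C *v x t + e t + d t"
    and noise: "\<And>t. infnorm (d t) \<le> dmax"
    and attack: "\<exists>K. card K \<le> s \<and> (\<forall>t. \<forall>i. i \<notin> K \<longrightarrow> e t $ i = 0)"
    and rank: "\<And>\<Gamma>. card \<Gamma> = CARD('p) - s \<Longrightarrow> obs_full_rank C A l \<Gamma>"
    and window: "l + 1 \<ge> CARD('n)"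
    and gam: "0 < \<gamma>" "\<gamma> < 1"
    and lp: "\<And>t \<Gamma>. l \<le> t \<Longrightarrow> card \<Gamma> = CARD('p) - s \<Longrightarrow>
               lp_minimizer C A B l y u t \<Gamma> (xh t \<Gamma>) (dl t \<Gamma>)"
    and feasible: "\<And>t. l \<le> t \<Longrightarrow> \<exists>v.
               \<forall>\<Gamma>. card \<Gamma> = CARD('p) - s \<and> dl t \<Gamma> \<le> dmax \<longrightarrow>
                 qp_constraint H q A B \<gamma> (xd_prop A B l u t (xh t \<Gamma>))
                   (Delta H A \<gamma> l dmax (dl t \<Gamma>) (obs_m C A l \<Gamma>)) v"
    and qp: "\<And>t. l \<le> t \<Longrightarrow>
               (\<forall>\<Gamma>. card \<Gamma> = CARD('p) - s \<and> dl t \<Gamma> \<le> dmax \<longrightarrow>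
                 qp_constraint H q A B \<gamma> (xd_prop A B l u t (xh t \<Gamma>))
                   (Delta H A \<gamma> l dmax (dl t \<Gamma>) (obs_m C A l \<Gamma>)) (u t)) \<and>
               (\<forall>v. (\<forall>\<Gamma>. card \<Gamma> = CARD('p) - s \<and> dl t \<Gamma> \<le> dmax \<longrightarrow>
                 qp_constraint H q A B \<gamma> (xd_prop A B l u t (xh t \<Gamma>))
                   (Delta H A \<gamma> l dmax (dl t \<Gamma>) (obs_m C A l \<Gamma>)) v) \<longrightarrow>
                 (norm (u t - unom t))\<^sup>2 \<le> (norm (v - unom t))\<^sup>2)"
    and init: "x l \<in> safe_set H q"
  shows "\<forall>t\<ge>l. x t \<in> safe_set H q"
proof -
  obtain K where "card K \<le> s" and "\<And>t i. i \<notin> K \<Longrightarrow> e t $ i = 0"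
    using attack by blast
  then obtain \<Gamma> where card_\<Gamma>: "card \<Gamma> = CARD('p) - s"
    and attack_free: "\<And>t i. i \<in> \<Gamma> \<Longrightarrow> e t $ i = 0"
    using obtain_attack_free_sensors by metis
  note rank_\<Gamma> = rank[OF card_\<Gamma>]
  \<comment> \<open>only the constraint part of the QP is needed\<close>
  have step: "x (Suc t) \<in> safe_set H q" if "l \<le> t" and safe: "x t \<in> safe_set H q" for t
  proof -
    note lp_\<Gamma> = lp[OF \<open>l \<le> t\<close> card_\<Gamma>]
    note estimate = lp_minimizer_estimate_error[of x A B u y C e d dmax, OF dyn meas noise
        attack_free rank_\<Gamma> lp_\<Gamma>]
    have "qp_constraint H q A B \<gamma> (xd_prop A B l u t (xh t \<Gamma>))
        (Delta H A \<gamma> l dmax (dl t \<Gamma>) (obs_m C A l \<Gamma>)) (u t)"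
      using qp[OF \<open>l \<le> t\<close>] card_\<Gamma> estimate(1) by blast
    moreover have "x t - xd_prop A B l u t (xh t \<Gamma>) = mpow A l *v (x (t - l) - xh t \<Gamma>)"
      using trajectory_eq_xd_prop[of x A B u, OF dyn \<open>l \<le> t\<close>] xd_prop_diff by metis
    ultimately have "A *v x t + B *v u t \<in> safe_set H q"
      using safe gam(2) component_le_Delta[OF estimate(2)] by (intro safe_set_step) auto
    then show ?thesis
      by (simp add: dyn)
  qed
  show ?thesis
  proof (intro allI impI)
    show "x t \<in> safe_set H q" if "l \<le> t" for t
      using that by (induction t rule: nat_induct_at_least) (simp_all add: init step)
  qed
qed

end
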